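(* Let $N\ge2$ and suppose there exists a robust Hadamard matrix of size $N$. Then every matrix belonging to any ray or any counter-ray of the Birkhoff polytope $\mathcal{B}_N$ is unistochastic. If moreover there exists a real robust Hadamard matrix of size $N$, then every such matrix is orthostochastic.
   Context: A bistochastic matrix is a real $N\times N$ matrix with nonnegative entries whose rows and columns each sum to 1; the set of them is the Birkhoff polytope $\mathcal{B}_N$. A bistochastic $B$ is unistochastic if there is a unitary $U\in U(N)$ with $B_{ij}=|U_{ij}|^2$ for all $i,j$, and orthostochastic if such $U$ can be chosen real orthogonal. $W_N$ denotes the $N\times N$ matrix with all entries $1/N$. For a permutation matrix $P$ of size $N$, the ray of $P$ is $\{\alpha P+(1-\alpha)W_N:\alpha\ge 0\}\cap\mathcal{B}_N$ and the counter-ray of $P$ is $\{\alpha P+(1-\alpha)W_N:\alpha\le 0\}\cap\mathcal{B}_N$. A (complex) Hadamard matrix of size $N$ is an $N\times N$ matrix $H$ with $|H_{ij}|=1$ and $HH^\dagger=N\mathbb{I}_N$; it is robust if for every $i\neq j$ the matrix $\begin{pmatrix}H_{ii}&H_{ij}\\ H_{ji}&H_{jj}\end{pmatrix}$ is a Hadamard matrix of size 2. *)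

theory Defs
  imports "HOL-Analysis.Analysis"
begin

text \<open>Square matrices of size N are indexed by a finite type 'n with CARD('n) = N.\<close>

definition bistochastic :: "real^'n^'n \<Rightarrow> bool" where
  "bistochastic B \<longleftrightarrow> (\<forall>i j. B$i$j \<ge> 0) \<and> (\<forall>i. (\<Sum>j\<in>UNIV. B$i$j) = 1) \<and> (\<forall>j. (\<Sum>i\<in>UNIV. B$i$j) = 1)"

definition cmat_adjoint :: "complex^'n^'m \<Rightarrow> complex^'m^'n" where
  "cmat_adjoint U = (\<chi> i j. cnj (U$j$i))"

definition unitary_matrix :: "complex^'n^'n \<Rightarrow> bool" where
  "unitary_matrix U \<longleftrightarrow> U ** cmat_adjoint U = mat 1 \<and> cmat_adjoint U ** U = mat 1"

definition unistochastic :: "real^'n^'n \<Rightarrow> bool" where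
  "unistochastic B \<longleftrightarrow> bistochastic B \<and>
     (\<exists>U::complex^'n^'n. unitary_matrix U \<and> (\<forall>i j. B$i$j = (cmod (U$i$j))^2))"

definition orthostochastic :: "real^'n^'n \<Rightarrow> bool" where
  "orthostochastic B \<longleftrightarrow> bistochastic B \<and>
     (\<exists>Q::real^'n^'n. orthogonal_matrix Q \<and> (\<forall>i j. B$i$j = (Q$i$j)^2))"

definition W_mat :: "real^'n^'n" where
  "W_mat = (\<chi> i j. 1 / real CARD('n))"

definition perm_matrix :: "('n \<Rightarrow> 'n) \<Rightarrow> real^'n^'n" where
  "perm_matrix p = (\<chi> i j. if p i = j then 1 else 0)"

definition ray :: "('n \<Rightarrow> 'n) \<Rightarrow> (real^'n^'n) set" where
  "ray p = {B. \<exists>\<alpha>::real. \<alpha> \<ge> 0 \<and> B = \<alpha> *\<^sub>R perm_matrix p + (1 - \<alpha>) *\<^sub>R W_mat \<and> bistochastic B}"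

definition counter_ray :: "('n \<Rightarrow> 'n) \<Rightarrow> (real^'n^'n) set" where
  "counter_ray p = {B. \<exists>\<alpha>::real. \<alpha> \<le> 0 \<and> B = \<alpha> *\<^sub>R perm_matrix p + (1 - \<alpha>) *\<^sub>R W_mat \<and> bistochastic B}"

definition hadamard :: "complex^'n^'n \<Rightarrow> bool" where
  "hadamard H \<longleftrightarrow> (\<forall>i j. cmod (H$i$j) = 1) \<and>
     H ** cmat_adjoint H = of_nat CARD('n) *\<^sub>R (mat 1 :: complex^'n^'n)"

definition robust_hadamard :: "complex^'n^'n \<Rightarrow> bool" where
  "robust_hadamard H \<longleftrightarrow> hadamard H \<and>
     (\<forall>i j. i \<noteq> j \<longrightarrow>
        hadamard ((\<chi> (k::2) (l::2). H $ (if k = 1 then i else j) $ (if l = 1 then i else j)) :: complex^2^2))"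

end

theory Submission imports Defs begin

text \<open>For a robust Hadamard matrix H, the matrix c H + d diag(H) is unitary as soon as
  c^2 N + 2cd + d^2 = 1: robustness says exactly that the cross terms
  H diag(H)* + diag(H) H* vanish off the diagonal. Its entries have modulus
  \<bar>c\<bar> off the diagonal and \<bar>c + d\<bar> on it, so after permuting rows by p we obtain a
  unitary matrix whose squared moduli are (1 - \<alpha>)/N off the pattern of p and \<alpha> + (1 - \<alpha>)/N
  on it, i.e. the matrix \<alpha> P + (1 - \<alpha>) W. Nonnegativity of these two numbers is what
  membership of the Birkhoff polytope guarantees (using N \<ge> 2). If H is real, so is the
  unitary matrix, which is then orthogonal.\<close>

definition diag_perturb :: "real \<Rightarrow> real \<Rightarrow> complex^'n^'n \<Rightarrow> complex^'n^'n" where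
  "diag_perturb c d H = (\<chi> i j. of_real c * H$i$j + (if i = j then of_real d * H$j$j else 0))"

lemma hadamard_row_inner:
  fixes H :: "complex^'n^'n"
  assumes "hadamard H"
  shows "(\<Sum>j\<in>UNIV. H$a$j * cnj (H$b$j)) = (if a = b then of_nat CARD('n) else 0)"
proof -
  have "(H ** cmat_adjoint H)$a$b = (of_nat CARD('n) *\<^sub>R (mat 1 :: complex^'n^'n))$a$b"
    using assms unfolding hadamard_def by simp
  then show ?thesis
    by (simp add: matrix_matrix_mult_def cmat_adjoint_def mat_def) (simp add: scaleR_conv_of_real)
qed

lemma hadamard_entry_times_cnj: "hadamard H \<Longrightarrow> H$a$b * cnj (H$a$b) = 1"
  by (metis complex_norm_square hadamard_def of_real_1 power_one)

lemma robust_hadamard_cross_terms: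
  fixes H :: "complex^'n^'n"
  assumes "robust_hadamard H" "a \<noteq> b"
  shows "H$a$a * cnj (H$b$a) + H$a$b * cnj (H$b$b) = 0"
proof -
  let ?K = "(\<chi> (k::2) (l::2). H $ (if k = 1 then a else b) $ (if l = 1 then a else b)) :: complex^2^2"
  have "hadamard ?K" using assms unfolding robust_hadamard_def by blast
  from hadamard_row_inner[OF this, of 1 2] show ?thesis by (simp add: sum_2)
qed

lemma diag_perturb_unitary:
  fixes H :: "complex^'n^'n" and c d :: real
  assumes rh: "robust_hadamard H" and cd: "c^2 * real CARD('n) + 2*c*d + d^2 = 1"
  shows "diag_perturb c d H ** cmat_adjoint (diag_perturb c d H) = mat 1"
proof -
  let ?M = "diag_perturb c d H"
  have h: "hadamard H" using rh robust_hadamard_def by blast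
  have "(?M ** cmat_adjoint ?M)$a$b = (mat 1 :: complex^'n^'n)$a$b" for a b
  proof -
    have entry: "?M$a$j * cnj (?M$b$j) = of_real (c^2) * (H$a$j * cnj (H$b$j))
       + (if j = b then of_real (c*d) * (H$a$b * cnj (H$b$b)) else 0)
       + (if j = a then of_real (c*d) * (H$a$a * cnj (H$b$a)) else 0)
       + (if a = b \<and> j = a then of_real (d^2) * (H$a$a * cnj (H$a$a)) else 0)" for j
      unfolding diag_perturb_def by (auto simp: algebra_simps power2_eq_square)
    have "(?M ** cmat_adjoint ?M)$a$b = (\<Sum>j\<in>UNIV. ?M$a$j * cnj (?M$b$j))"
      by (simp add: matrix_matrix_mult_def cmat_adjoint_def)
    also have "\<dots> = of_real (c^2) * (\<Sum>j\<in>UNIV. H$a$j * cnj (H$b$j))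
       + of_real (c*d) * (H$a$a * cnj (H$b$a) + H$a$b * cnj (H$b$b))
       + (if a = b then of_real (d^2) * (H$a$a * cnj (H$a$a)) else 0)"
      unfolding entry by (cases "a = b") (simp_all add: sum.distrib sum_distrib_left algebra_simps)
    also have "\<dots> = (mat 1 :: complex^'n^'n)$a$b"
    proof (cases "a = b")
      case True
      have "of_real (c^2 * real CARD('n) + 2*c*d + d^2) = (1::complex)" using cd by simp
      then show ?thesis
        using True hadamard_row_inner[OF h, of a a] hadamard_entry_times_cnj[OF h, of a a]
        by (simp add: mat_def algebra_simps)
    next
      case False
      then show ?thesis
        using hadamard_row_inner[OF h, of a b] robust_hadamard_cross_terms[OF rh False]
        by (simp add: mat_def)
    qed
    finally show ?thesis .
  qed
  then show ?thesis by (simp add: vec_eq_iff)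
qed

lemma cmod_diag_perturb:
  assumes "hadamard H"
  shows "cmod (diag_perturb c d H $ a $ b) = \<bar>c + (if a = b then d else 0)\<bar>"
proof -
  have "diag_perturb c d H $ a $ b = of_real (c + (if a = b then d else 0)) * H$a$b"
    unfolding diag_perturb_def by (simp add: algebra_simps)
  moreover have "cmod (H$a$b) = 1" using assms hadamard_def by blast
  ultimately show ?thesis by (simp only: norm_mult norm_of_real mult_1_right)
qed

lemma permute_rows_unitary:
  fixes A :: "complex^'n^'n"
  assumes "inj p" "A ** cmat_adjoint A = mat 1"
  shows "(\<chi> i. A $ p i) ** cmat_adjoint (\<chi> i. A $ p i) = mat 1"
proof -
  have "((\<chi> i. A $ p i) ** cmat_adjoint (\<chi> i. A $ p i))$i$k = (A ** cmat_adjoint A)$(p i)$(p k)" for i k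
    by (simp add: matrix_matrix_mult_def cmat_adjoint_def)
  then show ?thesis using assms by (simp add: vec_eq_iff mat_def inj_eq)
qed

lemma perm_line_entry:
  "(\<alpha> *\<^sub>R perm_matrix p + (1 - \<alpha>) *\<^sub>R (W_mat :: real^'n^'n)) $ i $ j
     = (if p i = j then \<alpha> else 0) + (1 - \<alpha>) / real CARD('n)"
  by (simp add: perm_matrix_def W_mat_def)

lemma bistochastic_perm_line_coeffs:
  fixes p :: "'n::finite \<Rightarrow> 'n"
  assumes "CARD('n) \<ge> 2" and "bistochastic (\<alpha> *\<^sub>R perm_matrix p + (1 - \<alpha>) *\<^sub>R W_mat)"
  shows "(1 - \<alpha>) / real CARD('n) \<ge> 0" and "\<alpha> + (1 - \<alpha>) / real CARD('n) \<ge> 0"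
proof -
  obtain i :: 'n where True by blast
  have "\<exists>j. j \<noteq> p i"
  proof (rule ccontr)
    assume "\<not> ?thesis"
    then have "UNIV = {p i}" by auto
    then have "CARD('n) = card {p i}" by (rule arg_cong)
    then show False using assms(1) by simp
  qed
  then obtain j where "j \<noteq> p i" by blast
  have nonneg: "(\<alpha> *\<^sub>R perm_matrix p + (1 - \<alpha>) *\<^sub>R W_mat) $ i $ k \<ge> 0" for k
    using assms(2) unfolding bistochastic_def by blast
  show "(1 - \<alpha>) / real CARD('n) \<ge> 0"
    using nonneg[of j, unfolded perm_line_entry] \<open>j \<noteq> p i\<close> by simp
  show "\<alpha> + (1 - \<alpha>) / real CARD('n) \<ge> 0"
    using nonneg[of "p i", unfolded perm_line_entry] by simp
qed

lemma perm_line_unitary_witness: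
  fixes H :: "complex^'n^'n" and p :: "'n \<Rightarrow> 'n"
  assumes card: "CARD('n) \<ge> 2" and rh: "robust_hadamard H" and p: "p permutes UNIV"
    and bs: "bistochastic (\<alpha> *\<^sub>R perm_matrix p + (1 - \<alpha>) *\<^sub>R W_mat)"
  obtains V :: "complex^'n^'n" where "V ** cmat_adjoint V = mat 1"
    and "\<And>i j. (\<alpha> *\<^sub>R perm_matrix p + (1 - \<alpha>) *\<^sub>R W_mat) $ i $ j = (cmod (V$i$j))^2"
    and "(\<forall>i j. H$i$j \<in> \<real>) \<Longrightarrow> \<forall>i j. V$i$j \<in> \<real>"
proof -
  define N where "N = real CARD('n)"
  define c where "c = sqrt ((1 - \<alpha>) / N)"
  define d where "d = sqrt (\<alpha> + (1 - \<alpha>) / N) - c"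
  have c2: "c^2 = (1 - \<alpha>) / N" and cd2: "(c + d)^2 = \<alpha> + (1 - \<alpha>) / N"
    using bistochastic_perm_line_coeffs[OF card bs] unfolding c_def d_def N_def by simp_all
  have "c^2 * N + 2*c*d + d^2 = c^2 * (N - 1) + (c + d)^2"
    by (simp add: algebra_simps power2_eq_square)
  also have "\<dots> = 1" unfolding c2 cd2 using card by (simp add: N_def field_simps)
  finally have cd: "c^2 * real CARD('n) + 2*c*d + d^2 = 1" unfolding N_def .
  define V where "V = (\<chi> i. diag_perturb c d H $ p i)"
  have h: "hadamard H" using rh robust_hadamard_def by blast
  show thesis
  proof
    show "V ** cmat_adjoint V = mat 1"
      unfolding V_def using diag_perturb_unitary[OF rh cd] permutes_inj[OF p]
      by (rule permute_rows_unitary[rotated])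
    show "(\<alpha> *\<^sub>R perm_matrix p + (1 - \<alpha>) *\<^sub>R W_mat) $ i $ j = (cmod (V$i$j))^2" for i j
      using c2 cd2 unfolding V_def perm_line_entry N_def by (simp add: cmod_diag_perturb[OF h])
    show "\<forall>i j. V$i$j \<in> \<real>" if "\<forall>i j. H$i$j \<in> \<real>"
      using that unfolding V_def diag_perturb_def by (auto intro!: Reals_add Reals_mult)
  qed
qed

lemma unistochasticI:
  assumes "bistochastic B" "U ** cmat_adjoint U = mat 1" "\<And>i j. B$i$j = (cmod (U$i$j))^2"
  shows "unistochastic B"
  using assms matrix_left_right_inverse unfolding unistochastic_def unitary_matrix_def by blast

lemma orthostochasticI_real_unitary:
  fixes U :: "complex^'n^'n"
  assumes "bistochastic B" "U ** cmat_adjoint U = mat 1" "\<forall>i j. U$i$j \<in> \<real>"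
    and "\<And>i j. B$i$j = (cmod (U$i$j))^2"
  shows "orthostochastic B"
proof -
  define Q :: "real^'n^'n" where "Q = (\<chi> i j. Re (U$i$j))"
  have UQ: "U$i$j = of_real (Q$i$j)" for i j
    using assms(3) unfolding Q_def by (auto simp: Reals_def)
  have "(Q ** transpose Q)$i$k = Re ((U ** cmat_adjoint U)$i$k)" for i k
    by (simp add: matrix_matrix_mult_def cmat_adjoint_def transpose_def UQ)
  then have "Q ** transpose Q = mat 1"
    using assms(2) by (simp add: vec_eq_iff mat_def)
  then have "orthogonal_matrix Q"
    unfolding orthogonal_matrix_def using matrix_left_right_inverse by blast
  then show ?thesis
    unfolding orthostochastic_def using assms(1,4) UQ by auto
qed

theorem mainTheorem3:
  assumes "CARD('n) \<ge> 2"
    and "\<exists>H::complex^'n^'n. robust_hadamard H"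
  shows "(\<forall>p B. p permutes (UNIV::'n set) \<and> B \<in> ray p \<union> counter_ray p \<longrightarrow> unistochastic B)
       \<and> ((\<exists>H'::complex^'n^'n. robust_hadamard H' \<and> (\<forall>i j. H'$i$j \<in> \<real>)) \<longrightarrow>
           (\<forall>p B. p permutes (UNIV::'n set) \<and> B \<in> ray p \<union> counter_ray p \<longrightarrow> orthostochastic B))"
proof -
  have line: "\<exists>\<alpha>. bistochastic (\<alpha> *\<^sub>R perm_matrix p + (1 - \<alpha>) *\<^sub>R W_mat)
      \<and> B = \<alpha> *\<^sub>R perm_matrix p + (1 - \<alpha>) *\<^sub>R W_mat"
    if "B \<in> ray p \<union> counter_ray p" for p and B :: "real^'n^'n"
    using that unfolding ray_def counter_ray_def by blast
  obtain H :: "complex^'n^'n" where "robust_hadamard H" using assms(2) by blast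
  then have "unistochastic B" if "p permutes UNIV" "B \<in> ray p \<union> counter_ray p"
    for p and B :: "real^'n^'n"
    using line[OF that(2)] perm_line_unitary_witness[OF assms(1) _ that(1)]
    by (metis unistochasticI)
  moreover have "orthostochastic B"
    if "robust_hadamard H'" "\<forall>i j. H'$i$j \<in> \<real>" "p permutes UNIV" "B \<in> ray p \<union> counter_ray p"
    for H' :: "complex^'n^'n" and p and B :: "real^'n^'n"
    using line[OF that(4)] perm_line_unitary_witness[OF assms(1) that(1,3)] that(2)
    by (metis orthostochasticI_real_unitary)
  ultimately show ?thesis by blast
qed

end
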